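(* Let $k\ge 2$, $t\ge 0$, and consider a $t$-layer $k$-IGN whose activation functions belong to a collection $\Omega$. Then for every $j\in[d_t]$ there is an expression $\varphi_j\in\mathsf{TL}_k^{(tk)}(\Omega)$ with free variables among $x_1,\dots,x_k$ such that for every graph $G$ and every $\mathbf v\in V_G^k$, $[\![\varphi_j]\!]^{\mathbf v}_G=\mathbf F^{(t)}_{\mathbf v,j}$, where $\mathbf F^{(t)}$ is the tensor computed by the IGN on $G$.
   Context: Fix integers $n\ge 1$ and $\ell\ge 1$. A graph is a triple $G=(V_G,E_G,\mathrm{col}_G)$ with $V_G=[n]$, $E_G$ a set of unordered pairs of distinct vertices, and $\mathrm{col}_G:V_G\to\mathbb R^\ell$. Tensor language $\mathsf{TL}(\Omega)$: $\Omega$ is a collection of functions $f:\mathbb R^p\to\mathbb R$ ($p\ge1$ depending on $f$). Expressions: $\varphi::=\mathbf 1_{x=y}\mid \mathbf 1_{x\neq y}\mid E(x,y)\mid P_s(x)\mid \varphi\cdot\varphi\mid \varphi+\varphi\mid a\cdot\varphi\mid f(\varphi_1,\dots,\varphi_p)\mid \sum_x\varphi$ ($s\in[\ell]$, $a\in\mathbb R$, $f\in\Omega$), with the usual free variables ($\sum_x$ binds $x$). Semantics for a graph $G$ and valuation $\nu$ into $V_G$: $[\![E(x,y)]\!]^\nu_G=1$ if $\nu(x)\nu(y)\in E_G$ else $0$; $[\![P_s(x)]\!]^\nu_G=\mathrm{col}_G(\nu(x))_s$; $[\![\mathbf 1_{x\,\mathrm{op}\,y}]\!]^\nu_G=1$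 if $\nu(x)\,\mathrm{op}\,\nu(y)$ else $0$; $\cdot,+,a\cdot,f$ act on values; $[\![\sum_x\varphi]\!]^\nu_G=\sum_{v\in V_G}[\![\varphi]\!]^{\nu[x\mapsto v]}_G$. $[\![\varphi]\!]^{\mathbf v}_G$ denotes the value under $x_i\mapsto v_i$. Summation depth: $0$ for atoms, max over components for $\cdot,+,f(\dots)$, unchanged by $a\cdot$, $+1$ for $\sum_x$. $\mathsf{TL}_k^{(t)}(\Omega)$: expressions using only variables $x_1,\dots,x_k$ (re-binding allowed) of summation depth at most $t$. $k$-IGN. For $\mathbf v\in V_G^k$, $\mathsf{atp}_k(G,\mathbf v)\in\mathbb R^{d_0}$, $d_0=2\binom k2+k\ell$, lists for $1\le i<j\le k$ the indicators of $v_i=v_j$ and of $v_iv_j\in E_G$, and $\mathrm{col}_G(v_i)$ for $i\in[k]$. For $m\ge1$, $\sim_m$ is the equivalence on $[n]^m$ with $\mathbf a\sim_m\mathbf b$ iff for all $i,j\in[m]$: $a_i=a_j\Leftrightarrow b_i=b_j$; $[n]^m/{\sim_m}$ its classes. A $t$-layer $k$-IGN is given by dimensions $d_0,d_1,\dots,d_t$, real constants $c^{(r)}_{\gamma,i,j}$ ($\gamma\in[n]^{2k}/{\sim_{2k}}$, $i\in[d_{r-1}]$, $j\in[d_r]$), $b^{(r)}_{\mu,j}$ ($\mu\in[n]^k/{\sim_k}$) and activations $\sigma_r:\mathbb R\to\mathbb R$ for $r\in[t]$. On a graph $G$ it computes $\mathbf F^{(0)}\in\mathbb R^{n^k\times d_0}$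 with $\mathbf F^{(0)}_{\mathbf v,:}=\mathsf{atp}_k(G,\mathbf v)$, and for $r\in[t]$, $j\in[d_r]$, $\mathbf v\in[n]^k$: $$\mathbf F^{(r)}_{\mathbf v,j}=\sigma_r\Bigl(\sum_{\gamma\in[n]^{2k}/\sim_{2k}}\ \sum_{\mathbf w\in[n]^k}\mathbf 1_{(\mathbf v,\mathbf w)\in\gamma}\sum_{i\in[d_{r-1}]}c^{(r)}_{\gamma,i,j}\,\mathbf F^{(r-1)}_{\mathbf w,i}+\sum_{\mu\in[n]^k/\sim_k}\mathbf 1_{\mathbf v\in\mu}\,b^{(r)}_{\mu,j}\Bigr).$$ *)

theory Defs
  imports Complex_Main
begin

text \<open>Graphs on vertex set [n] = {0..<n} (0-based): a pair (E, col) with E a symmetric,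
irreflexive edge relation on [n] and col v s the s-th colour component (s < l, 0-based).\<close>

type_synonym graph = "(nat \<Rightarrow> nat \<Rightarrow> bool) \<times> (nat \<Rightarrow> nat \<Rightarrow> real)"

definition is_graph :: "nat \<Rightarrow> graph \<Rightarrow> bool" where
  "is_graph n G \<longleftrightarrow> (\<forall>u v. fst G u v \<longrightarrow> u < n \<and> v < n \<and> u \<noteq> v \<and> fst G v u)"

text \<open>Tensor language. Variables are natural numbers; x_1..x_k are 0..k-1.
A function symbol Fn p f args stands for f : R^p \<rightarrow> R (given on lists of length p).\<close>

datatype tl =
    EqI nat nat
  | NeqI nat nat
  | Edge nat nat
  | Col nat nat
  | Mul tl tl
  | Add tl tl
  | Scale real tl
  | Fn nat "real list \<Rightarrow> real" "tl list"
  | Sum nat tl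

fun tl_sem :: "nat \<Rightarrow> graph \<Rightarrow> (nat \<Rightarrow> nat) \<Rightarrow> tl \<Rightarrow> real" where
  "tl_sem n G \<nu> (EqI x y) = (if \<nu> x = \<nu> y then 1 else 0)"
| "tl_sem n G \<nu> (NeqI x y) = (if \<nu> x \<noteq> \<nu> y then 1 else 0)"
| "tl_sem n G \<nu> (Edge x y) = (if fst G (\<nu> x) (\<nu> y) then 1 else 0)"
| "tl_sem n G \<nu> (Col s x) = snd G (\<nu> x) s"
| "tl_sem n G \<nu> (Mul a b) = tl_sem n G \<nu> a * tl_sem n G \<nu> b"
| "tl_sem n G \<nu> (Add a b) = tl_sem n G \<nu> a + tl_sem n G \<nu> b"
| "tl_sem n G \<nu> (Scale c a) = c * tl_sem n G \<nu> a"
| "tl_sem n G \<nu> (Fn p f args) = f (map (tl_sem n G \<nu>) args)"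
| "tl_sem n G \<nu> (Sum x a) = (\<Sum>v<n. tl_sem n G (\<nu>(x := v)) a)"

fun sdepth :: "tl \<Rightarrow> nat" where
  "sdepth (EqI x y) = 0"
| "sdepth (NeqI x y) = 0"
| "sdepth (Edge x y) = 0"
| "sdepth (Col s x) = 0"
| "sdepth (Mul a b) = max (sdepth a) (sdepth b)"
| "sdepth (Add a b) = max (sdepth a) (sdepth b)"
| "sdepth (Scale c a) = sdepth a"
| "sdepth (Fn p f args) = fold max (map sdepth args) 0"
| "sdepth (Sum x a) = Suc (sdepth a)"

fun wf_tl :: "(nat \<times> (real list \<Rightarrow> real)) set \<Rightarrow> nat \<Rightarrow> nat \<Rightarrow> tl \<Rightarrow> bool" where
  "wf_tl \<Omega> l k (EqI x y) = (x < k \<and> y < k)"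
| "wf_tl \<Omega> l k (NeqI x y) = (x < k \<and> y < k)"
| "wf_tl \<Omega> l k (Edge x y) = (x < k \<and> y < k)"
| "wf_tl \<Omega> l k (Col s x) = (s < l \<and> x < k)"
| "wf_tl \<Omega> l k (Mul a b) = (wf_tl \<Omega> l k a \<and> wf_tl \<Omega> l k b)"
| "wf_tl \<Omega> l k (Add a b) = (wf_tl \<Omega> l k a \<and> wf_tl \<Omega> l k b)"
| "wf_tl \<Omega> l k (Scale c a) = wf_tl \<Omega> l k a"
| "wf_tl \<Omega> l k (Fn p f args) =
     ((p, f) \<in> \<Omega> \<and> length args = p \<and> (\<forall>a\<in>set args. wf_tl \<Omega> l k a))"
| "wf_tl \<Omega> l k (Sum x a) = (x < k \<and> wf_tl \<Omega> l k a)"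

definition TL :: "(nat \<times> (real list \<Rightarrow> real)) set \<Rightarrow> nat \<Rightarrow> nat \<Rightarrow> nat \<Rightarrow> tl set" where
  "TL \<Omega> l k t = {\<phi>. wf_tl \<Omega> l k \<phi> \<and> sdepth \<phi> \<le> t}"

definition tuples :: "nat \<Rightarrow> nat \<Rightarrow> nat list set" where
  "tuples n m = {xs. length xs = m \<and> set xs \<subseteq> {..<n}}"

definition eqtype_rel :: "nat \<Rightarrow> nat \<Rightarrow> (nat list \<times> nat list) set" where
  "eqtype_rel n m = {(a, b). a \<in> tuples n m \<and> b \<in> tuples n m \<and>
      (\<forall>i<m. \<forall>j<m. (a ! i = a ! j \<longleftrightarrow> b ! i = b ! j))}"

definition eq_classes :: "nat \<Rightarrow> nat \<Rightarrow> nat list set set" where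
  "eq_classes n m = tuples n m // eqtype_rel n m"

definition atp :: "nat \<Rightarrow> nat \<Rightarrow> graph \<Rightarrow> nat list \<Rightarrow> real list" where
  "atp k l G v =
     concat [[if v ! i = v ! j then 1 else 0, if fst G (v ! i) (v ! j) then 1 else 0].
               (i, j) \<leftarrow> concat [[(i, j). j \<leftarrow> [Suc i..<k]]. i \<leftarrow> [0..<k]]]
     @ concat [[snd G (v ! i) s. s \<leftarrow> [0..<l]]. i \<leftarrow> [0..<k]]"

text \<open>Features of a k-IGN: layer r \<ge> 1 uses c r, b r, sigma r; feature indices are 0-based,
i < d (r-1), j < d r.\<close>

primrec ign :: "nat \<Rightarrow> nat \<Rightarrow> nat \<Rightarrow> (nat \<Rightarrow> nat)
    \<Rightarrow> (nat \<Rightarrow> nat list set \<Rightarrow> nat \<Rightarrow> nat \<Rightarrow> real)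
    \<Rightarrow> (nat \<Rightarrow> nat list set \<Rightarrow> nat \<Rightarrow> real)
    \<Rightarrow> (nat \<Rightarrow> real \<Rightarrow> real) \<Rightarrow> graph \<Rightarrow> nat \<Rightarrow> nat list \<Rightarrow> nat \<Rightarrow> real" where
  "ign n l k d c b \<sigma> G 0 v j = atp k l G v ! j"
| "ign n l k d c b \<sigma> G (Suc r) v j =
     \<sigma> (Suc r)
       ((\<Sum>\<gamma>\<in>eq_classes n (2 * k). \<Sum>w\<in>tuples n k.
           (if v @ w \<in> \<gamma> then 1 else 0) *
           (\<Sum>i<d r. c (Suc r) \<gamma> i j * ign n l k d c b \<sigma> G r w i))
      + (\<Sum>\<mu>\<in>eq_classes n k. (if v \<in> \<mu> then 1 else 0) * b (Suc r) \<mu> j))"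

end

theory Submission
  imports Defs "HOL-Combinatorics.Permutations"
begin

text \<open>
  A \<open>t\<close>-layer \<open>k\<close>-IGN is assembled from linear combinations, activations and the equivariant
  aggregations \<open>v \<mapsto> \<Sum>\<^sub>w [(v, w) \<in> \<gamma>] g(w)\<close>, so by induction on the layers it suffices that
  functions definable in \<open>TL\<^sub>k\<close> are closed under these operations, an aggregation costing \<open>k\<close>
  summations. The equality type \<open>\<gamma>\<close> of \<open>(v, w)\<close> splits into a condition on \<open>v\<close>, a condition on
  \<open>w\<close> (absorbed into \<open>g\<close>) and cross literals \<open>v\<^sub>a = w\<^sub>b\<close> or \<open>v\<^sub>a \<noteq> w\<^sub>b\<close>. Inclusion-exclusion
  removes the negative literals, and the positive ones force \<open>w\<^sub>b = v\<^sub>s\<^sub>(\<^sub>b\<^sub>)\<close> for \<open>b\<close> in some set \<open>B\<close>.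
  Such a substitution sum is computed by rebinding each of the \<open>k\<close> variables at most once: summing
  over it if \<open>b \<notin> B\<close>, copying \<open>v\<^sub>s\<^sub>(\<^sub>b\<^sub>)\<close> into it otherwise. This fails when \<open>s\<close> has cycles, so the
  variables of \<open>g\<close> are first renamed by a permutation that agrees with \<open>s\<close> on representatives
  of its fibres; what remains is an idempotent substitution, whose sources are never overwritten.
\<close>

fun rename_tl :: "(nat \<Rightarrow> nat) \<Rightarrow> tl \<Rightarrow> tl" where
  "rename_tl \<pi> (EqI x y) = EqI (\<pi> x) (\<pi> y)"
| "rename_tl \<pi> (NeqI x y) = NeqI (\<pi> x) (\<pi> y)"
| "rename_tl \<pi> (Edge x y) = Edge (\<pi> x) (\<pi> y)"
| "rename_tl \<pi> (Col s x) = Col s (\<pi> x)"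
| "rename_tl \<pi> (Mul a b) = Mul (rename_tl \<pi> a) (rename_tl \<pi> b)"
| "rename_tl \<pi> (Add a b) = Add (rename_tl \<pi> a) (rename_tl \<pi> b)"
| "rename_tl \<pi> (Scale c a) = Scale c (rename_tl \<pi> a)"
| "rename_tl \<pi> (Fn p f args) = Fn p f (map (rename_tl \<pi>) args)"
| "rename_tl \<pi> (Sum x a) = Sum (\<pi> x) (rename_tl \<pi> a)"

lemma tl_sem_rename_tl:
  "inj \<pi> \<Longrightarrow> tl_sem n G \<nu> (rename_tl \<pi> \<phi>) = tl_sem n G (\<nu> \<circ> \<pi>) \<phi>"
proof (induction \<phi> arbitrary: \<nu>)
  case (Fn p f args)
  then show ?case by (simp cong: map_cong)
next
  case (Sum x a)
  then show ?case by (simp add: inj_eq fun_upd_def comp_def)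
qed auto

lemma sdepth_rename_tl: "sdepth (rename_tl \<pi> \<phi>) = sdepth \<phi>"
  by (induction \<phi>) (simp_all cong: map_cong)

lemma wf_tl_rename_tl:
  "(\<And>i. i < k \<Longrightarrow> \<pi> i < k) \<Longrightarrow> wf_tl \<Omega> l k \<phi> \<Longrightarrow> wf_tl \<Omega> l k (rename_tl \<pi> \<phi>)"
  by (induction \<phi>) auto

lemma obtain_bij_betw_representatives:
  obtains X where "X \<subseteq> A" "bij_betw f X (f ` A)"
proof
  let ?X = "inv_into A f ` f ` A"
  show "?X \<subseteq> A"
    by (auto intro: inv_into_into)
  have "inj_on f ?X"
    by (rule inj_onI) (auto simp: f_inv_into_f)
  moreover have "f ` ?X = f ` A"
    by (rule image_inv_into_cancel) auto
  ultimately show "bij_betw f ?X (f ` A)"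
    by (simp add: bij_betw_def)
qed

lemma permutes_extending_bij_betw:
  assumes "finite S" "X \<subseteq> S" "Y \<subseteq> S" "bij_betw f X Y"
  obtains p where "p permutes S" "\<And>x. x \<in> X \<Longrightarrow> p x = f x"
proof -
  have "card (S - X) = card (S - Y)"
    using assms by (simp add: card_Diff_subset bij_betw_same_card finite_subset)
  then obtain h where h: "bij_betw h (S - X) (S - Y)"
    using assms(1) finite_same_card_bij by blast
  define p where "p x = (if x \<in> X then f x else if x \<in> S then h x else x)" for x
  have "bij_betw p X Y \<longleftrightarrow> bij_betw f X Y"
    by (rule bij_betw_cong) (simp add: p_def)
  moreover have "bij_betw p (S - X) (S - Y) \<longleftrightarrow> bij_betw h (S - X) (S - Y)"
    by (rule bij_betw_cong) (simp add: p_def)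
  ultimately have "bij_betw p X Y" "bij_betw p (S - X) (S - Y)"
    using assms(4) h by blast+
  then have "bij_betw p (X \<union> (S - X)) (Y \<union> (S - Y))"
    by (rule bij_betw_combine) blast
  then have "p permutes S"
    using assms(2,3) by (intro bij_imp_permutes) (auto simp: Un_absorb1 p_def)
  then show ?thesis
    using that by (simp add: p_def)
qed

lemma tuples_nth_less: "v \<in> tuples n k \<Longrightarrow> i < k \<Longrightarrow> v ! i < n"
  using nth_mem by (fastforce simp: tuples_def)

lemma map_tuples: "(\<And>i. i < k \<Longrightarrow> \<nu> i < n) \<Longrightarrow> map \<nu> [0..<k] \<in> tuples n k"
  by (auto simp: tuples_def)

lemma finite_tuples: "finite (tuples n m)"
proof -
  have "tuples n m = {xs. set xs \<subseteq> {..<n} \<and> length xs = m}"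
    by (auto simp: tuples_def)
  then show ?thesis
    using finite_lists_length_eq[of "{..<n}" m] by simp
qed

lemma tuples_eq_iff: "v \<in> tuples n k \<Longrightarrow> w \<in> tuples n k \<Longrightarrow> v = w \<longleftrightarrow> (\<forall>i<k. v ! i = w ! i)"
  by (auto simp: tuples_def list_eq_iff_nth_eq)

lemma sum_tuples_if_eq:
  assumes "v \<in> tuples n k"
  shows "(\<Sum>w\<in>tuples n k. if \<forall>c<k. w ! c = v ! c then g w else 0) = g v"
proof -
  have "(\<forall>c<k. w ! c = v ! c) \<longleftrightarrow> w = v" if "w \<in> tuples n k" for w
    using that assms by (auto simp: tuples_eq_iff)
  then show ?thesis
    using assms by (simp add: finite_tuples cong: sum.cong)
qed

lemma sum_lessThan_sum_tuples_collapse: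
  assumes "c < k" and PQ: "\<And>w y. w \<in> tuples n k \<Longrightarrow> P y w \<longleftrightarrow> y = w ! c \<and> Q w"
  shows "(\<Sum>y<n. \<Sum>w\<in>tuples n k. if P y w then g w else 0) = (\<Sum>w\<in>tuples n k. if Q w then g w else 0)"
proof -
  have "(\<Sum>y<n. if P y w then g w else 0) = (if Q w then g w else 0)" if w: "w \<in> tuples n k" for w
  proof -
    have "(\<Sum>y<n. if P y w then g w else 0) = (\<Sum>y<n. if y = w ! c then (if Q w then g w else 0) else 0)"
      using PQ[OF w] by (intro sum.cong) auto
    then show ?thesis
      using tuples_nth_less[OF w assms(1)] by simp
  qed
  then show ?thesis
    by (subst sum.swap) simp
qed

lemma map_update_upt:
  "b < k \<Longrightarrow> map (\<nu>(b := y)) [0..<k] = (map \<nu> [0..<k])[b := y]"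
  by (rule nth_equalityI) (auto simp: nth_list_update)

definition same_eqtype :: "nat \<Rightarrow> nat list \<Rightarrow> nat list \<Rightarrow> bool" where
  "same_eqtype m a b \<longleftrightarrow> (\<forall>i<m. \<forall>j<m. (a ! i = a ! j) = (b ! i = b ! j))"

lemma eq_classes_representative:
  assumes "\<gamma> \<in> eq_classes n m"
  obtains r where "\<And>x. x \<in> tuples n m \<Longrightarrow> x \<in> \<gamma> \<longleftrightarrow> same_eqtype m r x"
proof -
  obtain r where "r \<in> tuples n m" "\<gamma> = eqtype_rel n m `` {r}"
    using assms unfolding eq_classes_def by (auto elim: quotientE)
  then show ?thesis
    using that by (auto simp: eqtype_rel_def same_eqtype_def)
qed

lemma same_eqtype_append:
  assumes "length v = k" "length w = k"
  shows "same_eqtype (2 * k) r (v @ w) \<longleftrightarrow>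
    same_eqtype k r v \<and>
    (\<forall>a<k. \<forall>b<k. (r ! (k + a) = r ! (k + b)) = (w ! a = w ! b)) \<and>
    (\<forall>a<k. \<forall>b<k. (v ! a = w ! b) = (r ! a = r ! (k + b)))"
proof -
  have all_less_double: "(\<forall>i<2 * k. P i) \<longleftrightarrow> (\<forall>i<k. P i) \<and> (\<forall>i<k. P (k + i))" for P
    by (metis add_diff_inverse_nat mult_2 nat_add_left_cancel_less trans_less_add1)
  show ?thesis
    unfolding same_eqtype_def all_less_double using assms by (auto simp: nth_append eq_commute)
qed

section \<open>Functions expressible in \<open>TL\<^sub>k\<close>\<close>

locale tl_variables =
  fixes n :: nat and \<Omega> :: "(nat \<times> (real list \<Rightarrow> real)) set" and l k :: nat
  assumes variables_nonempty: "0 < k"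
begin

definition represents :: "nat \<Rightarrow> tl \<Rightarrow> (graph \<Rightarrow> nat list \<Rightarrow> real) \<Rightarrow> bool" where
  "represents D \<phi> f \<longleftrightarrow> wf_tl \<Omega> l k \<phi> \<and> sdepth \<phi> \<le> D \<and>
     (\<forall>G \<nu>. (\<forall>i<k. \<nu> i < n) \<longrightarrow> tl_sem n G \<nu> \<phi> = f G (map \<nu> [0..<k]))"

definition expressible :: "nat \<Rightarrow> (graph \<Rightarrow> nat list \<Rightarrow> real) \<Rightarrow> bool" where
  "expressible D f \<longleftrightarrow> (\<exists>\<phi>. represents D \<phi> f)"

lemma expressibleI: "represents D \<phi> f \<Longrightarrow> expressible D f"
  unfolding expressible_def ..

lemma represents_sem:
  "represents D \<phi> f \<Longrightarrow> \<forall>i<k. \<nu> i < n \<Longrightarrow> tl_sem n G \<nu> \<phi> = f G (map \<nu> [0..<k])"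
  unfolding represents_def by blast

lemma expressible_imp_TL:
  assumes "expressible D f"
  shows "\<exists>\<phi>\<in>TL \<Omega> l k D. \<forall>G v. v \<in> tuples n k \<longrightarrow> tl_sem n G (\<lambda>i. v ! i) \<phi> = f G v"
proof -
  obtain \<phi> where \<phi>: "represents D \<phi> f"
    using assms unfolding expressible_def ..
  have "tl_sem n G (\<lambda>i. v ! i) \<phi> = f G v" if "v \<in> tuples n k" for G v
  proof -
    have "map (\<lambda>i. v ! i) [0..<k] = v"
      using that map_nth[of v] by (simp add: tuples_def)
    then show ?thesis
      using represents_sem[OF \<phi>, of "\<lambda>i. v ! i"] that by (simp add: tuples_nth_less)
  qed
  then show ?thesis
    using \<phi> by (auto simp: TL_def represents_def)
qed

lemma expressible_cong:
  "expressible D f \<Longrightarrow> (\<And>G v. v \<in> tuples n k \<Longrightarrow> f G v = g G v) \<Longrightarrow> expressible D g"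
  unfolding expressible_def represents_def by (metis map_tuples)

lemma expressible_mono: "expressible D f \<Longrightarrow> D \<le> D' \<Longrightarrow> expressible D' f"
  unfolding expressible_def represents_def using le_trans by blast

text \<open>There is no constant atom: \<open>c\<close> is written as \<open>c \<cdot> 1\<^sub>x\<^sub>1\<^sub>=\<^sub>x\<^sub>1\<close>, hence \<open>0 < k\<close>.\<close>

lemma expressible_const: "expressible D (\<lambda>G v. c)"
  using variables_nonempty by (intro expressibleI[of _ "Scale c (EqI 0 0)"]) (simp add: represents_def)

lemma expressible_eq_literal:
  "a < k \<Longrightarrow> b < k \<Longrightarrow> expressible 0 (\<lambda>G v. if (v ! a = v ! b) = p then 1 else 0)"
  by (intro expressibleI[of _ "if p then EqI a b else NeqI a b"]) (simp add: represents_def)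

lemma expressible_add:
  assumes "expressible D f" "expressible D g"
  shows "expressible D (\<lambda>G v. f G v + g G v)"
proof -
  obtain \<phi> \<psi> where "represents D \<phi> f" "represents D \<psi> g"
    using assms unfolding expressible_def by blast
  then have "represents D (Add \<phi> \<psi>) (\<lambda>G v. f G v + g G v)"
    by (simp add: represents_def)
  then show ?thesis
    by (rule expressibleI)
qed

lemma expressible_mult:
  assumes "expressible D f" "expressible D' g"
  shows "expressible (max D D') (\<lambda>G v. f G v * g G v)"
proof -
  obtain \<phi> \<psi> where "represents D \<phi> f" "represents D' \<psi> g"
    using assms unfolding expressible_def by blast
  then have "represents (max D D') (Mul \<phi> \<psi>) (\<lambda>G v. f G v * g G v)"
    by (auto simp: represents_def)
  then show ?thesis
    by (rule expressibleI)
qed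

lemma expressible_scale:
  assumes "expressible D f"
  shows "expressible D (\<lambda>G v. a * f G v)"
proof -
  obtain \<phi> where "represents D \<phi> f"
    using assms unfolding expressible_def ..
  then have "represents D (Scale a \<phi>) (\<lambda>G v. a * f G v)"
    by (simp add: represents_def)
  then show ?thesis
    by (rule expressibleI)
qed

lemma expressible_diff:
  assumes "expressible D f" "expressible D g"
  shows "expressible D (\<lambda>G v. f G v - g G v)"
  using expressible_add[OF assms(1) expressible_scale[OF assms(2), of "-1"]] by simp

lemma expressible_activation:
  assumes "(1, f) \<in> \<Omega>" "\<And>x. f [x] = h x" "expressible D g"
  shows "expressible D (\<lambda>G v. h (g G v))"
proof -
  obtain \<phi> where "represents D \<phi> g"
    using assms(3) unfolding expressible_def ..
  then have "represents D (Fn 1 f [\<phi>]) (\<lambda>G v. h (g G v))"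
    using assms(1,2) by (simp add: represents_def)
  then show ?thesis
    by (rule expressibleI)
qed

lemma expressible_sum:
  assumes "\<And>i. i \<in> A \<Longrightarrow> expressible D (f i)"
  shows "expressible D (\<lambda>G v. \<Sum>i\<in>A. f i G v)"
  using assms
proof (induction A rule: infinite_finite_induct)
  case (insert x A)
  then have "expressible D (\<lambda>G v. f x G v + (\<Sum>i\<in>A. f i G v))"
    by (intro expressible_add) auto
  then show ?case
    using insert.hyps by simp
qed (simp_all add: expressible_const)

lemma expressible_eq_pattern:
  "finite A \<Longrightarrow> A \<subseteq> {..<k} \<times> {..<k} \<Longrightarrow>
    expressible 0 (\<lambda>G v. if \<forall>(a, b)\<in>A. (v ! a = v ! b) = R a b then 1 else 0)"
proof (induction A rule: finite_induct)
  case (insert x A)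
  obtain a b where x: "x = (a, b)" "a < k" "b < k"
    using insert.prems by auto
  have "expressible (max 0 0) (\<lambda>G v. (if (v ! a = v ! b) = R a b then 1 else 0) *
      (if \<forall>(a, b)\<in>A. (v ! a = v ! b) = R a b then 1 else 0))"
    using insert x by (intro expressible_mult expressible_eq_literal) auto
  then have "expressible 0 (\<lambda>G v. (if (v ! a = v ! b) = R a b then 1 else 0) *
      (if \<forall>(a, b)\<in>A. (v ! a = v ! b) = R a b then 1 else 0))"
    by simp
  then show ?case
    by (rule expressible_cong) (simp add: x(1))
qed (simp add: expressible_const)

lemma expressible_sum_update:
  assumes "b < k" "expressible D f"
  shows "expressible (Suc D) (\<lambda>G v. \<Sum>y<n. f G (v[b := y]))"
proof -
  obtain \<phi> where "represents D \<phi> f"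
    using assms(2) unfolding expressible_def ..
  then have "represents (Suc D) (Sum b \<phi>) (\<lambda>G v. \<Sum>y<n. f G (v[b := y]))"
    using assms(1) by (simp add: represents_def map_update_upt)
  then show ?thesis
    by (rule expressibleI)
qed

lemma expressible_copy:
  assumes "a < k" "b < k" "a \<noteq> b" "expressible D f"
  shows "expressible (Suc D) (\<lambda>G v. f G (v[b := v ! a]))"
proof -
  obtain \<phi> where \<phi>: "represents D \<phi> f"
    using assms(4) unfolding expressible_def ..
  have "tl_sem n G \<nu> (Sum b (Mul (EqI b a) \<phi>)) = f G ((map \<nu> [0..<k])[b := \<nu> a])"
    if \<nu>: "\<forall>i<k. \<nu> i < n" for G \<nu>
  proof -
    have "tl_sem n G \<nu> (Sum b (Mul (EqI b a) \<phi>)) =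
        (\<Sum>y<n. (if y = \<nu> a then 1 else 0) * f G ((map \<nu> [0..<k])[b := y]))"
      using represents_sem[OF \<phi>] \<nu> assms(1-3) by (auto intro!: sum.cong simp: map_update_upt)
    also have "\<dots> = (\<Sum>y<n. if y = \<nu> a then f G ((map \<nu> [0..<k])[b := y]) else 0)"
      by (rule sum.cong) simp_all
    finally show ?thesis
      using \<nu> assms(1) by simp
  qed
  then have "represents (Suc D) (Sum b (Mul (EqI b a) \<phi>)) (\<lambda>G v. f G (v[b := v ! a]))"
    using \<phi> assms(1,2) by (simp add: represents_def)
  then show ?thesis
    by (rule expressibleI)
qed

lemma expressible_permute:
  assumes "\<pi> permutes {..<k}" "expressible D f"
  shows "expressible D (\<lambda>G v. f G (map (\<lambda>i. v ! \<pi> i) [0..<k]))"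
proof -
  obtain \<phi> where \<phi>: "represents D \<phi> f"
    using assms(2) unfolding expressible_def ..
  have \<pi>: "inj \<pi>" "\<And>i. i < k \<Longrightarrow> \<pi> i < k"
    using assms(1) permutes_inj permutes_in_image by fastforce+
  have "tl_sem n G \<nu> (rename_tl \<pi> \<phi>) = f G (map (\<lambda>i. map \<nu> [0..<k] ! \<pi> i) [0..<k])"
    if "\<forall>i<k. \<nu> i < n" for G \<nu>
  proof -
    have map_eq: "map (\<lambda>i. map \<nu> [0..<k] ! \<pi> i) [0..<k] = map (\<nu> \<circ> \<pi>) [0..<k]"
      using \<pi>(2) by simp
    show ?thesis
      unfolding map_eq using represents_sem[OF \<phi>, of "\<nu> \<circ> \<pi>"] \<pi> that by (simp add: tl_sem_rename_tl)
  qed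
  then have "represents D (rename_tl \<pi> \<phi>) (\<lambda>G v. f G (map (\<lambda>i. v ! \<pi> i) [0..<k]))"
    using \<phi> \<pi> by (simp add: represents_def sdepth_rename_tl wf_tl_rename_tl)
  then show ?thesis
    by (rule expressibleI)
qed

section \<open>Sums over a second tuple\<close>

text \<open>The variables in \<open>C\<close> are rebound one at a time, summed over if outside \<open>B\<close> and otherwise
  copied from \<open>\<rho> c\<close>, which is never rebound.\<close>

lemma expressible_sum_fixing:
  assumes g: "expressible D g" and C: "C \<subseteq> {..<k}"
    and \<rho>: "\<And>c. c \<in> C \<inter> B \<Longrightarrow> \<rho> c < k \<and> \<rho> c \<notin> C"
  shows "expressible (D + card C) (\<lambda>G v. \<Sum>w\<in>tuples n k.
    if (\<forall>c<k. c \<notin> C \<longrightarrow> w ! c = v ! c) \<and> (\<forall>c\<in>C \<inter> B. w ! c = v ! \<rho> c) then g G w else 0)"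
proof -
  define sel where "sel C v w \<longleftrightarrow> (\<forall>c<k. c \<notin> C \<longrightarrow> w ! c = v ! c) \<and> (\<forall>c\<in>C \<inter> B. w ! c = v ! \<rho> c)"
    for C and v w :: "nat list"
  define F where "F C G v = (\<Sum>w\<in>tuples n k. if sel C v w then g G w else 0)" for C G v
  have "expressible (D + card C) (F C)"
    using C \<rho>
  proof (induction C rule: infinite_finite_induct)
    case (infinite C)
    then show ?case
      using finite_subset by blast
  next
    case empty
    have "F {} G v = g G v" if "v \<in> tuples n k" for G v
      using sum_tuples_if_eq[OF that] by (simp add: F_def sel_def)
    then show ?case
      using g by (auto elim: expressible_cong)
  next
    case (insert c C)
    have c: "c < k" and C_le: "C \<subseteq> {..<k}"
      using insert.prems(1) by auto
    have IH: "expressible (D + card C) (F C)"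
      using insert.prems by (intro insert.IH) auto
    have card: "D + card (insert c C) = Suc (D + card C)"
      using insert.hyps by simp
    show ?case
    proof (cases "c \<in> B")
      case True
      have \<rho>c: "\<rho> c < k" "\<rho> c \<noteq> c"
        using insert.prems(2)[of c] True by auto
      have "F C G (v[c := v ! \<rho> c]) = F (insert c C) G v" if "v \<in> tuples n k" for G v
      proof -
        have "sel C (v[c := v ! \<rho> c]) w \<longleftrightarrow> sel (insert c C) v w" for w
          using that True c \<rho>c insert.hyps(2) insert.prems(2)
          by (auto simp: sel_def tuples_def nth_list_update)
        then show ?thesis
          by (simp add: F_def)
      qed
      then show ?thesis
        using expressible_copy[OF \<rho>c(1) c \<rho>c(2) IH] card
        by (auto elim: expressible_cong)
    next
      case False
      have "(\<Sum>y<n. F C G (v[c := y])) = F (insert c C) G v" if "v \<in> tuples n k" for G v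
        unfolding F_def
      proof (rule sum_lessThan_sum_tuples_collapse[OF c])
        show "sel C (v[c := y]) w \<longleftrightarrow> y = w ! c \<and> sel (insert c C) v w" for w y
          using that c False insert.hyps(2) insert.prems(2)
          by (auto simp: sel_def tuples_def nth_list_update)
      qed
      then show ?thesis
        using expressible_sum_update[OF c IH] card
        by (auto elim: expressible_cong)
    qed
  qed
  then show ?thesis
    unfolding F_def[abs_def] sel_def .
qed

text \<open>Renaming by \<open>\<pi>\<close>, which agrees with \<open>s\<close> on representatives \<open>X\<close> of the fibres of \<open>s\<close>,
  turns the substitution into the idempotent \<open>\<rho>\<close>, whose sources \<open>X\<close> are kept fixed.\<close>

lemma expressible_sum_subst:
  assumes g: "expressible D g" and B: "B \<subseteq> {..<k}" and s: "s ` B \<subseteq> {..<k}"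
  shows "expressible (D + k) (\<lambda>G v. \<Sum>w\<in>tuples n k. if \<forall>b\<in>B. w ! b = v ! s b then g G w else 0)"
proof -
  obtain X where X: "X \<subseteq> B" "bij_betw s X (s ` B)"
    by (rule obtain_bij_betw_representatives)
  obtain \<pi> where \<pi>: "\<pi> permutes {..<k}" "\<And>x. x \<in> X \<Longrightarrow> \<pi> x = s x"
    using permutes_extending_bij_betw[OF finite_lessThan _ s X(2)] X(1) B by blast
  define \<rho> where "\<rho> b = inv_into X s (s b)" for b
  have \<rho>: "\<rho> b \<in> X" "\<pi> (\<rho> b) = s b" if "b \<in> B" for b
  proof -
    have "s b \<in> s ` B"
      using that by blast
    then show "\<rho> b \<in> X" "\<pi> (\<rho> b) = s b"
      using bij_betw_apply[OF bij_betw_inv_into[OF X(2)]] bij_betw_inv_into_right[OF X(2)] \<pi>(2)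
      by (auto simp: \<rho>_def)
  qed
  have \<rho>_fix: "\<rho> x = x" if "x \<in> X" for x
    using bij_betw_inv_into_left[OF X(2) that] by (simp add: \<rho>_def)
  define C where "C = {..<k} - X"
  have "card C \<le> k"
    unfolding C_def by (metis card_lessThan card_mono Diff_subset finite_lessThan)
  moreover have "expressible (D + card C) (\<lambda>G u. \<Sum>w\<in>tuples n k.
      if (\<forall>c<k. c \<notin> C \<longrightarrow> w ! c = u ! c) \<and> (\<forall>c\<in>C \<inter> B. w ! c = u ! \<rho> c) then g G w else 0)"
    using \<rho>(1) X(1) B by (intro expressible_sum_fixing[OF g]) (auto simp: C_def)
  ultimately have "expressible (D + k) (\<lambda>G u. \<Sum>w\<in>tuples n k.
      if (\<forall>c<k. c \<notin> C \<longrightarrow> w ! c = u ! c) \<and> (\<forall>c\<in>C \<inter> B. w ! c = u ! \<rho> c) then g G w else 0)"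
    by (auto elim: expressible_mono)
  moreover have "((\<forall>c<k. c \<notin> C \<longrightarrow> w ! c = u ! c) \<and> (\<forall>c\<in>C \<inter> B. w ! c = u ! \<rho> c)) \<longleftrightarrow>
      (\<forall>b\<in>B. w ! b = u ! \<rho> b)" for w u :: "nat list"
  proof -
    have "(\<forall>c<k. c \<notin> C \<longrightarrow> w ! c = u ! c) \<longleftrightarrow> (\<forall>c\<in>X. w ! c = u ! \<rho> c)"
      using X(1) B \<rho>_fix by (auto simp: C_def)
    moreover have "B = X \<union> (C \<inter> B)"
      using X(1) B by (auto simp: C_def)
    ultimately show ?thesis
      by (metis Un_iff)
  qed
  ultimately have "expressible (D + k) (\<lambda>G u. \<Sum>w\<in>tuples n k.
      if \<forall>b\<in>B. w ! b = u ! \<rho> b then g G w else 0)"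
    by simp
  then have "expressible (D + k) (\<lambda>G v. \<Sum>w\<in>tuples n k.
      if \<forall>b\<in>B. w ! b = map (\<lambda>i. v ! \<pi> i) [0..<k] ! \<rho> b then g G w else 0)"
    by (rule expressible_permute[OF \<pi>(1)])
  moreover have "map (\<lambda>i. v ! \<pi> i) [0..<k] ! \<rho> b = v ! s b" if "b \<in> B" for v :: "nat list" and b
    using \<rho>[OF that] X(1) B by auto
  ultimately show ?thesis
    by (simp cong: ball_cong)
qed

lemma expressible_sum_cross_equalities:
  assumes g: "expressible D g" and P: "P \<subseteq> {..<k} \<times> {..<k}"
  shows "expressible (D + k) (\<lambda>G v. \<Sum>w\<in>tuples n k.
    if \<forall>(a, b)\<in>P. v ! a = w ! b then g G w else 0)"
proof -
  define s where "s b = (LEAST a. (a, b) \<in> P)" for b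
  have s: "(s b, b) \<in> P" if "(a, b) \<in> P" for a b
    using that unfolding s_def by (rule LeastI)
  define A where "A = (\<lambda>(a, b). (a, s b)) ` P"
  have "finite A"
    using finite_subset[OF P] by (simp add: A_def)
  moreover have "A \<subseteq> {..<k} \<times> {..<k}"
    using P by (auto simp: A_def dest: s subsetD[OF P])
  ultimately have "expressible 0 (\<lambda>G v. if \<forall>(a, b)\<in>A. (v ! a = v ! b) = True then 1 else 0)"
    by (rule expressible_eq_pattern)
  moreover have "expressible (D + k) (\<lambda>G v. \<Sum>w\<in>tuples n k.
      if \<forall>b\<in>snd ` P. w ! b = v ! s b then g G w else 0)"
    using P by (intro expressible_sum_subst[OF g]) (auto dest: s subsetD[OF P])
  ultimately have "expressible (max 0 (D + k)) (\<lambda>G v.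
      (if \<forall>(a, b)\<in>A. (v ! a = v ! b) = True then 1 else 0) *
      (\<Sum>w\<in>tuples n k. if \<forall>b\<in>snd ` P. w ! b = v ! s b then g G w else 0))"
    by (rule expressible_mult)
  moreover have "(\<forall>(a, b)\<in>P. v ! a = w ! b) \<longleftrightarrow>
      (\<forall>(a, b)\<in>A. v ! a = v ! b) \<and> (\<forall>b\<in>snd ` P. w ! b = v ! s b)" for v w :: "nat list"
  proof
    assume eq: "\<forall>(a, b)\<in>P. v ! a = w ! b"
    then have "\<forall>b\<in>snd ` P. w ! b = v ! s b"
      using s by fastforce
    moreover have "\<forall>(a, b)\<in>A. v ! a = v ! b"
    proof (clarsimp simp: A_def)
      fix a b assume "(a, b) \<in> P"
      then have "v ! a = w ! b" "v ! s b = w ! b"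
        using eq s by auto
      then show "v ! a = v ! s b"
        by simp
    qed
    ultimately show "(\<forall>(a, b)\<in>A. v ! a = v ! b) \<and> (\<forall>b\<in>snd ` P. w ! b = v ! s b)"
      by blast
  next
    assume "(\<forall>(a, b)\<in>A. v ! a = v ! b) \<and> (\<forall>b\<in>snd ` P. w ! b = v ! s b)"
    then show "\<forall>(a, b)\<in>P. v ! a = w ! b"
      by (fastforce simp: A_def)
  qed
  ultimately show ?thesis
    by (auto elim!: expressible_cong simp: sum_distrib_left intro!: sum.cong)
qed

lemma expressible_sum_cross_literals:
  assumes g: "expressible D g" and "finite N"
    and "P \<subseteq> {..<k} \<times> {..<k}" "N \<subseteq> {..<k} \<times> {..<k}"
  shows "expressible (D + k) (\<lambda>G v. \<Sum>w\<in>tuples n k.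
    if (\<forall>(a, b)\<in>P. v ! a = w ! b) \<and> (\<forall>(a, b)\<in>N. v ! a \<noteq> w ! b) then g G w else 0)"
  using assms(2-)
proof (induction N arbitrary: P rule: finite_induct)
  case empty
  then show ?case
    using expressible_sum_cross_equalities[OF g] by simp
next
  case (insert x N)
  obtain a b where x: "x = (a, b)"
    by fastforce
  \<comment> \<open>inclusion-exclusion on the literal \<open>v ! a \<noteq> w ! b\<close>\<close>
  have "expressible (D + k) (\<lambda>G v.
      (\<Sum>w\<in>tuples n k. if (\<forall>(a, b)\<in>P. v ! a = w ! b) \<and> (\<forall>(a, b)\<in>N. v ! a \<noteq> w ! b)
         then g G w else 0) -
      (\<Sum>w\<in>tuples n k. if (\<forall>(a, b)\<in>insert x P. v ! a = w ! b) \<and> (\<forall>(a, b)\<in>N. v ! a \<noteq> w ! b)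
         then g G w else 0))"
    using insert by (intro expressible_diff insert.IH) auto
  then show ?case
    by (rule expressible_cong) (auto simp: x sum_subtractf[symmetric] intro!: sum.cong)
qed

lemma expressible_sum_eqtype:
  assumes g: "expressible D g"
  shows "expressible (D + k) (\<lambda>G v. \<Sum>w\<in>tuples n k.
    if same_eqtype (2 * k) r (v @ w) then g G w else 0)"
proof -
  define P where "P = {(a, b). a < k \<and> b < k \<and> r ! a = r ! (k + b)}"
  define N where "N = {(a, b). a < k \<and> b < k \<and> r ! a \<noteq> r ! (k + b)}"
  define left where "left v \<longleftrightarrow> (\<forall>(a, b)\<in>{..<k} \<times> {..<k}. (v ! a = v ! b) = (r ! a = r ! b))"
    for v :: "nat list"
  define right where
    "right w \<longleftrightarrow> (\<forall>(a, b)\<in>{..<k} \<times> {..<k}. (w ! a = w ! b) = (r ! (k + a) = r ! (k + b)))"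
    for w :: "nat list"
  define cross where "cross v w \<longleftrightarrow> (\<forall>(a, b)\<in>P. v ! a = w ! b) \<and> (\<forall>(a, b)\<in>N. v ! a \<noteq> w ! b)"
    for v w :: "nat list"
  have "finite N"
    by (rule finite_subset[of _ "{..<k} \<times> {..<k}"]) (auto simp: N_def)
  have eqtype_iff: "same_eqtype (2 * k) r (v @ w) \<longleftrightarrow> left v \<and> cross v w \<and> right w"
    if "v \<in> tuples n k" "w \<in> tuples n k" for v w
  proof -
    have "length v = k" "length w = k"
      using that by (simp_all add: tuples_def)
    then show ?thesis
      by (simp add: same_eqtype_append)
        (auto simp: same_eqtype_def left_def right_def cross_def P_def N_def)
  qed
  have "expressible 0 (\<lambda>G w. if right w then 1 else 0)"
    unfolding right_def by (rule expressible_eq_pattern) auto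
  from expressible_mult[OF this g]
  have "expressible D (\<lambda>G w. (if right w then 1 else 0) * g G w)"
    by simp
  then have "expressible (D + k) (\<lambda>G v. \<Sum>w\<in>tuples n k.
      if cross v w then (if right w then 1 else 0) * g G w else 0)"
    unfolding cross_def
    using \<open>finite N\<close> by (rule expressible_sum_cross_literals) (auto simp: P_def N_def)
  moreover have "expressible 0 (\<lambda>G v. if left v then 1 else 0)"
    unfolding left_def by (rule expressible_eq_pattern) auto
  ultimately have "expressible (D + k) (\<lambda>G v. (if left v then 1 else 0) *
      (\<Sum>w\<in>tuples n k. if cross v w then (if right w then 1 else 0) * g G w else 0))"
    using expressible_mult by fastforce
  then show ?thesis
    by (rule expressible_cong) (auto simp: eqtype_iff sum_distrib_left intro!: sum.cong)
qed

end

section \<open>Invariant graph networks\<close>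

definition atp_tl :: "nat \<Rightarrow> nat \<Rightarrow> tl list" where
  "atp_tl k l =
     concat [[EqI i j, Edge i j]. (i, j) \<leftarrow> concat [[(i, j). j \<leftarrow> [Suc i..<k]]. i \<leftarrow> [0..<k]]]
     @ concat [[Col s i. s \<leftarrow> [0..<l]]. i \<leftarrow> [0..<k]]"

lemma tl_sem_atp_tl: "map (tl_sem n G \<nu>) (atp_tl k l) = atp k l G (map \<nu> [0..<k])"
  unfolding atp_tl_def atp_def
  by (auto simp: map_concat comp_def case_prod_beta
      intro!: arg_cong2[where f = "(@)"] arg_cong[where f = concat] map_cong)

lemma wf_tl_atp_tl: "\<phi> \<in> set (atp_tl k l) \<Longrightarrow> wf_tl \<Omega> l k \<phi> \<and> sdepth \<phi> = 0"
  unfolding atp_tl_def by auto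

lemma sum_lessThan_choose_two: "(\<Sum>i<k. i) = k choose 2"
  by (induction k) (simp_all add: numeral_2_eq_2)

lemma length_atp_tl: "length (atp_tl k l) = 2 * (k choose 2) + k * l"
proof -
  have "length (concat [[(i, j). j \<leftarrow> [Suc i..<k]]. i \<leftarrow> [0..<k]]) = (\<Sum>i<k. k - Suc i)"
    by (simp add: length_concat sum_list_sum_nth atLeast0LessThan comp_def)
  also have "\<dots> = k choose 2"
    using sum.nat_diff_reindex[of id k] by (simp add: sum_lessThan_choose_two)
  finally show ?thesis
    unfolding atp_tl_def by (simp add: length_concat comp_def case_prod_beta sum_list_triv)
qed

context tl_variables
begin

lemma expressible_atp: "j < 2 * (k choose 2) + k * l \<Longrightarrow> expressible 0 (\<lambda>G v. atp k l G v ! j)"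
proof -
  assume j: "j < 2 * (k choose 2) + k * l"
  then have "atp_tl k l ! j \<in> set (atp_tl k l)"
    by (simp add: length_atp_tl)
  moreover have "tl_sem n G \<nu> (atp_tl k l ! j) = atp k l G (map \<nu> [0..<k]) ! j" for G \<nu>
    using j tl_sem_atp_tl[of n G \<nu> k l, symmetric] by (simp add: length_atp_tl)
  ultimately have "represents 0 (atp_tl k l ! j) (\<lambda>G v. atp k l G v ! j)"
    by (simp add: represents_def wf_tl_atp_tl)
  then show ?thesis
    by (rule expressibleI)
qed

lemma expressible_class_indicator:
  assumes "\<mu> \<in> eq_classes n k"
  shows "expressible 0 (\<lambda>G v. if v \<in> \<mu> then 1 else 0)"
proof -
  obtain r where r: "\<And>v. v \<in> tuples n k \<Longrightarrow> v \<in> \<mu> \<longleftrightarrow> same_eqtype k r v"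
    using eq_classes_representative[OF assms] by blast
  have "expressible 0 (\<lambda>G v. if \<forall>(a, b)\<in>{..<k} \<times> {..<k}. (v ! a = v ! b) = (r ! a = r ! b)
      then 1 else 0)"
    by (rule expressible_eq_pattern) auto
  then show ?thesis
    by (rule expressible_cong) (auto simp: r same_eqtype_def)
qed

lemma expressible_equivariant_sum:
  assumes "\<gamma> \<in> eq_classes n (2 * k)" "expressible D g"
  shows "expressible (D + k) (\<lambda>G v. \<Sum>w\<in>tuples n k. (if v @ w \<in> \<gamma> then 1 else 0) * g G w)"
proof -
  obtain r where r: "\<And>x. x \<in> tuples n (2 * k) \<Longrightarrow> x \<in> \<gamma> \<longleftrightarrow> same_eqtype (2 * k) r x"
    using eq_classes_representative[OF assms(1)] by blast
  show ?thesis
  proof (rule expressible_cong[OF expressible_sum_eqtype[OF assms(2), where r = r]])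
    fix G v assume v: "v \<in> tuples n k"
    have "v @ w \<in> tuples n (2 * k)" if "w \<in> tuples n k" for w
      using v that by (auto simp: tuples_def)
    then show "(\<Sum>w\<in>tuples n k. if same_eqtype (2 * k) r (v @ w) then g G w else 0) =
        (\<Sum>w\<in>tuples n k. (if v @ w \<in> \<gamma> then 1 else 0) * g G w)"
      using r by (auto intro!: sum.cong)
  qed
qed

lemma expressible_ign:
  assumes "d 0 = 2 * (k choose 2) + k * l"
    and activations: "\<forall>r\<in>{1..t}. \<exists>f. (1, f) \<in> \<Omega> \<and> (\<forall>x. f [x] = \<sigma> r x)"
  shows "r \<le> t \<Longrightarrow> j < d r \<Longrightarrow> expressible (r * k) (\<lambda>G v. ign n l k d c b \<sigma> G r v j)"
proof (induction r arbitrary: j)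
  case 0
  then show ?case
    using expressible_atp assms(1) by simp
next
  case (Suc r)
  obtain f where f: "(1, f) \<in> \<Omega>" "\<And>x. f [x] = \<sigma> (Suc r) x"
    using activations Suc.prems(1) by fastforce
  have message: "expressible (r * k) (\<lambda>G w. \<Sum>i<d r. c (Suc r) \<gamma> i j * ign n l k d c b \<sigma> G r w i)"
    for \<gamma>
    using Suc by (intro expressible_sum expressible_scale) auto
  have "expressible (Suc r * k) (\<lambda>G v. \<Sum>\<gamma>\<in>eq_classes n (2 * k). \<Sum>w\<in>tuples n k.
      (if v @ w \<in> \<gamma> then 1 else 0) * (\<Sum>i<d r. c (Suc r) \<gamma> i j * ign n l k d c b \<sigma> G r w i))"
    by (rule expressible_sum) (use expressible_equivariant_sum[OF _ message] in \<open>simp add: add.commute\<close>)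
  moreover have "expressible 0 (\<lambda>G v.
      \<Sum>\<mu>\<in>eq_classes n k. (if v \<in> \<mu> then 1 else 0) * b (Suc r) \<mu> j)"
    using expressible_mult[OF expressible_class_indicator expressible_const] by (intro expressible_sum) simp
  then have "expressible (Suc r * k) (\<lambda>G v.
      \<Sum>\<mu>\<in>eq_classes n k. (if v \<in> \<mu> then 1 else 0) * b (Suc r) \<mu> j)"
    by (rule expressible_mono) simp
  ultimately have "expressible (Suc r * k) (\<lambda>G v.
      (\<Sum>\<gamma>\<in>eq_classes n (2 * k). \<Sum>w\<in>tuples n k.
        (if v @ w \<in> \<gamma> then 1 else 0) * (\<Sum>i<d r. c (Suc r) \<gamma> i j * ign n l k d c b \<sigma> G r w i)) +
      (\<Sum>\<mu>\<in>eq_classes n k. (if v \<in> \<mu> then 1 else 0) * b (Suc r) \<mu> j))"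
    by (rule expressible_add)
  from expressible_activation[OF f this] show ?case
    by simp
qed

end

theorem mainTheorem8:
  fixes n l k t :: nat
    and \<Omega> :: "(nat \<times> (real list \<Rightarrow> real)) set"
    and d :: "nat \<Rightarrow> nat"
    and c :: "nat \<Rightarrow> nat list set \<Rightarrow> nat \<Rightarrow> nat \<Rightarrow> real"
    and b :: "nat \<Rightarrow> nat list set \<Rightarrow> nat \<Rightarrow> real"
    and \<sigma> :: "nat \<Rightarrow> real \<Rightarrow> real"
  assumes "n \<ge> 1" and "l \<ge> 1" and "k \<ge> 2"
    and "d 0 = 2 * (k choose 2) + k * l"
    and "\<forall>r\<in>{1..t}. \<exists>f. (1, f) \<in> \<Omega> \<and> (\<forall>x. f [x] = \<sigma> r x)"
  shows "\<forall>j < d t. \<exists>\<phi> \<in> TL \<Omega> l k (t * k).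
           \<forall>G v. is_graph n G \<longrightarrow> v \<in> tuples n k \<longrightarrow>
             tl_sem n G (\<lambda>i. v ! i) \<phi> = ign n l k d c b \<sigma> G t v j"
proof -
  interpret tl_variables n \<Omega> l k
    using assms(3) by unfold_locales simp
  show ?thesis
  proof (intro allI impI)
    fix j assume "j < d t"
    then have "expressible (t * k) (\<lambda>G v. ign n l k d c b \<sigma> G t v j)"
      using expressible_ign[where d = d and t = t and \<sigma> = \<sigma>, OF assms(4,5) order_refl] by blast
    then obtain \<phi> where "\<phi> \<in> TL \<Omega> l k (t * k)"
        "\<forall>G v. v \<in> tuples n k \<longrightarrow> tl_sem n G (\<lambda>i. v ! i) \<phi> = ign n l k d c b \<sigma> G t v j"
      using expressible_imp_TL by blast
    then show "\<exists>\<phi>\<in>TL \<Omega> l k (t * k). \<forall>G v. is_graph n G \<longrightarrow> v \<in> tuples n k \<longrightarrow>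
        tl_sem n G (\<lambda>i. v ! i) \<phi> = ign n l k d c b \<sigma> G t v j"
      by blast
  qed
qed

end
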